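(* Let $G$ be a $k$-regular $1$-nearly platonic graph with $k\ge 3$. Then every cut-vertex of $G$ lies on the boundary of the exceptional face of $G$.
   Context: A $1$-nearly platonic graph is a finite, connected, simple, regular plane graph with $f\ge 2$ faces such that $f-1$ of its faces all have the same length $d_1$ and the remaining face (the exceptional face) has length $d_2\ne d_1$, where $d_1,d_2\ge 3$. The length of a face is the total length of the closed walk(s) bounding it (a cut-edge contributes twice). *)

theory Defs
  imports "HOL-Combinatorics.Permutations" "HOL-Combinatorics.Orbits"
begin

text \<open>Plane graphs are represented combinatorially as combinatorial maps
(rotation systems): a finite set of darts D (half-edges), a fixed-point-free
involution alpha on D (the two darts of an edge) and a permutation sigma on D
(cyclic order of darts around each vertex). A connected map
is plane (genus 0) iff V - E + F = 2.\<close>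

definition comb_map :: "'d set \<Rightarrow> ('d \<Rightarrow> 'd) \<Rightarrow> ('d \<Rightarrow> 'd) \<Rightarrow> bool" where
  "comb_map D \<alpha> \<sigma> \<longleftrightarrow> finite D \<and> \<alpha> permutes D \<and> \<sigma> permutes D \<and>
     (\<forall>d\<in>D. \<alpha> (\<alpha> d) = d \<and> \<alpha> d \<noteq> d)"

definition face_perm :: "('d \<Rightarrow> 'd) \<Rightarrow> ('d \<Rightarrow> 'd) \<Rightarrow> 'd \<Rightarrow> 'd" where
  "face_perm \<alpha> \<sigma> = \<sigma> \<circ> \<alpha>"

definition map_verts :: "'d set \<Rightarrow> ('d \<Rightarrow> 'd) \<Rightarrow> 'd set set" where
  "map_verts D \<sigma> = orbit \<sigma> ` D"

definition map_edges :: "'d set \<Rightarrow> ('d \<Rightarrow> 'd) \<Rightarrow> 'd set set" where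
  "map_edges D \<alpha> = orbit \<alpha> ` D"

definition map_faces :: "'d set \<Rightarrow> ('d \<Rightarrow> 'd) \<Rightarrow> ('d \<Rightarrow> 'd) \<Rightarrow> 'd set set" where
  "map_faces D \<alpha> \<sigma> = orbit (face_perm \<alpha> \<sigma>) ` D"

text \<open>Length of a face = number of darts in its boundary walk(s)
(a cut-edge contributes twice).\<close>
definition face_length :: "'d set \<Rightarrow> nat" where
  "face_length F = card F"

definition map_adj :: "'d set \<Rightarrow> ('d \<Rightarrow> 'd) \<Rightarrow> ('d \<Rightarrow> 'd) \<Rightarrow> 'd set \<Rightarrow> 'd set \<Rightarrow> bool" where
  "map_adj D \<alpha> \<sigma> u v \<longleftrightarrow> (\<exists>d\<in>D. orbit \<sigma> d = u \<and> orbit \<sigma> (\<alpha> d) = v)"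

definition map_simple :: "'d set \<Rightarrow> ('d \<Rightarrow> 'd) \<Rightarrow> ('d \<Rightarrow> 'd) \<Rightarrow> bool" where
  "map_simple D \<alpha> \<sigma> \<longleftrightarrow>
     (\<forall>d\<in>D. orbit \<sigma> (\<alpha> d) \<noteq> orbit \<sigma> d) \<and>
     (\<forall>d\<in>D. \<forall>d'\<in>D. orbit \<sigma> d' = orbit \<sigma> d \<and> orbit \<sigma> (\<alpha> d') = orbit \<sigma> (\<alpha> d) \<longrightarrow> d' = d)"

definition connected_on :: "'d set \<Rightarrow> ('d \<Rightarrow> 'd) \<Rightarrow> ('d \<Rightarrow> 'd) \<Rightarrow> 'd set set \<Rightarrow> bool" where
  "connected_on D \<alpha> \<sigma> W \<longleftrightarrow>
     (\<forall>u\<in>W. \<forall>v\<in>W. (\<lambda>x y. x \<in> W \<and> y \<in> W \<and> map_adj D \<alpha> \<sigma> x y)\<^sup>*\<^sup>* u v)"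

definition map_connected :: "'d set \<Rightarrow> ('d \<Rightarrow> 'd) \<Rightarrow> ('d \<Rightarrow> 'd) \<Rightarrow> bool" where
  "map_connected D \<alpha> \<sigma> \<longleftrightarrow> connected_on D \<alpha> \<sigma> (map_verts D \<sigma>)"

definition plane_graph :: "'d set \<Rightarrow> ('d \<Rightarrow> 'd) \<Rightarrow> ('d \<Rightarrow> 'd) \<Rightarrow> bool" where
  "plane_graph D \<alpha> \<sigma> \<longleftrightarrow> comb_map D \<alpha> \<sigma> \<and> map_simple D \<alpha> \<sigma> \<and> map_connected D \<alpha> \<sigma> \<and>
     int (card (map_verts D \<sigma>)) - int (card (map_edges D \<alpha>)) + int (card (map_faces D \<alpha> \<sigma>)) = 2"

definition map_regular :: "'d set \<Rightarrow> ('d \<Rightarrow> 'd) \<Rightarrow> nat \<Rightarrow> bool" where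
  "map_regular D \<sigma> k \<longleftrightarrow> (\<forall>v\<in>map_verts D \<sigma>. card v = k)"

definition one_nearly_platonic ::
  "'d set \<Rightarrow> ('d \<Rightarrow> 'd) \<Rightarrow> ('d \<Rightarrow> 'd) \<Rightarrow> 'd set \<Rightarrow> nat \<Rightarrow> nat \<Rightarrow> bool" where
  "one_nearly_platonic D \<alpha> \<sigma> F0 d1 d2 \<longleftrightarrow>
     plane_graph D \<alpha> \<sigma> \<and> (\<exists>k. map_regular D \<sigma> k) \<and>
     card (map_faces D \<alpha> \<sigma>) \<ge> 2 \<and> d1 \<ge> 3 \<and> d2 \<ge> 3 \<and> d1 \<noteq> d2 \<and>
     F0 \<in> map_faces D \<alpha> \<sigma> \<and> face_length F0 = d2 \<and>
     (\<forall>F\<in>map_faces D \<alpha> \<sigma>. F \<noteq> F0 \<longrightarrow> face_length F = d1)"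

definition cut_vertex :: "'d set \<Rightarrow> ('d \<Rightarrow> 'd) \<Rightarrow> ('d \<Rightarrow> 'd) \<Rightarrow> 'd set \<Rightarrow> bool" where
  "cut_vertex D \<alpha> \<sigma> v \<longleftrightarrow> v \<in> map_verts D \<sigma> \<and>
     \<not> connected_on D \<alpha> \<sigma> (map_verts D \<sigma> - {v})"

definition on_face :: "('d \<Rightarrow> 'd) \<Rightarrow> 'd set \<Rightarrow> 'd set \<Rightarrow> bool" where
  "on_face \<sigma> v F \<longleftrightarrow> (\<exists>d\<in>F. orbit \<sigma> d = v)"

end

theory Submission
  imports Defs
begin

text \<open>Euler's formula, together with \<open>k \<ge> 3\<close> and \<open>d\<^sub>2 \<ge> 3\<close>, forces the common length
\<open>d\<^sub>1\<close> of the non-exceptional faces to be at most 5. On the other hand, if \<open>v\<close> is a cut-vertex,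
then the darts at \<open>v\<close> are cyclically ordered by \<open>\<sigma>\<close>, so somewhere two consecutive darts at \<open>v\<close>
lead out of and into a component \<open>C\<close> of \<open>G - v\<close>, respectively. The face through this
corner arrives at \<open>v\<close> from outside \<open>C\<close> and leaves \<open>v\<close> into \<open>C\<close>; simplicity and minimum
degree 2 forbid it to turn back immediately on either side, which gives six distinct darts
on it. So that face has length at least 6 and must be the exceptional one.\<close>

lemma orbit_eq_if_in_orbit:
  assumes "permutation p" "y \<in> orbit p x"
  shows "orbit p y = orbit p x"
  using assms cyclic_on_orbit' orbit_cyclic_eq3 by metis

lemma card_eq_sum_card_orbits:
  assumes "p permutes S" "finite S"
  shows "card S = (\<Sum>X\<in>orbit p ` S. card X)"
proof -
  have perm: "permutation p"
    using assms permutation_permutes by blast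
  have "\<Union>(orbit p ` S) = S"
    using permutes_orbit_subset[OF assms(1)] permutation_self_in_orbit[OF perm] by blast
  moreover have "pairwise disjnt (orbit p ` S)"
    unfolding pairwise_def disjnt_def using orbit_eq_if_in_orbit[OF perm] by blast
  moreover have "finite X" if "X \<in> orbit p ` S" for X
    using that permutes_orbit_subset[OF assms(1)] assms(2) finite_subset by blast
  ultimately show ?thesis
    using card_Union_disjoint by metis
qed

lemma orbit_exit:
  assumes "permutation p" "y \<in> orbit p x" "\<not> P x" "P y"
  shows "\<exists>z\<in>orbit p x. \<not> P z \<and> P (p z)"
proof -
  have x_in: "x \<in> orbit p x"
    using permutation_self_in_orbit[OF assms(1)] .
  have "P ((p ^^ n) x) \<Longrightarrow> \<exists>z\<in>orbit p x. \<not> P z \<and> P (p z)" for n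
  proof (induction n)
    case 0
    then show ?case using assms(3) by simp
  next
    case (Suc n)
    show ?case
    proof (cases "P ((p ^^ n) x)")
      case True
      then show ?thesis using Suc.IH by blast
    next
      case False
      then show ?thesis using Suc.prems funpow_in_orbit[OF x_in] by auto
    qed
  qed
  moreover obtain n where "y = (p ^^ n) x"
    using assms(2) unfolding orbit_altdef_permutation[OF assms(1)] by blast
  ultimately show ?thesis using assms(4) by blast
qed

locale combinatorial_map =
  fixes D :: "'d set" and \<alpha> \<sigma> :: "'d \<Rightarrow> 'd"
  assumes comb_map: "comb_map D \<alpha> \<sigma>"
begin

lemma finite_darts: "finite D"
  and alpha_permutes: "\<alpha> permutes D"
  and sigma_permutes: "\<sigma> permutes D"
  and alpha_alpha [simp]: "d \<in> D \<Longrightarrow> \<alpha> (\<alpha> d) = d"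
  and alpha_neq: "d \<in> D \<Longrightarrow> \<alpha> d \<noteq> d"
  using comb_map unfolding comb_map_def by auto

lemma alpha_in [simp]: "d \<in> D \<Longrightarrow> \<alpha> d \<in> D"
  and sigma_in [simp]: "d \<in> D \<Longrightarrow> \<sigma> d \<in> D"
  by (simp_all add: permutes_in_image[OF alpha_permutes] permutes_in_image[OF sigma_permutes])

lemma permutation_sigma: "permutation \<sigma>"
  using sigma_permutes finite_darts permutation_permutes by blast

lemma face_perm_permutes: "face_perm \<alpha> \<sigma> permutes D"
  unfolding face_perm_def using permutes_compose[OF alpha_permutes sigma_permutes] .

lemma vertex_sigma [simp]: "orbit \<sigma> (\<sigma> d) = orbit \<sigma> d"
  using permutation_orbit_step[OF permutation_sigma] .

lemma vertex_face_perm [simp]: "orbit \<sigma> (face_perm \<alpha> \<sigma> d) = orbit \<sigma> (\<alpha> d)"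
  unfolding face_perm_def by simp

lemma card_darts_verts: "card D = (\<Sum>v\<in>map_verts D \<sigma>. card v)"
  unfolding map_verts_def using card_eq_sum_card_orbits[OF sigma_permutes finite_darts] .

lemma card_darts_faces: "card D = (\<Sum>F\<in>map_faces D \<alpha> \<sigma>. card F)"
  unfolding map_faces_def using card_eq_sum_card_orbits[OF face_perm_permutes finite_darts] .

lemma card_darts_edges: "card D = 2 * card (map_edges D \<alpha>)"
proof -
  have "orbit \<alpha> d = {d, \<alpha> d}" if "d \<in> D" for d
  proof -
    have "(\<alpha> ^^ 2) d = d" using that by (simp add: numeral_2_eq_2)
    then have "orbit \<alpha> d = {(\<alpha> ^^ m) d | m. m < 2}"
      by (intro orbit_altdef_bounded) auto
    also have "\<dots> = {d, \<alpha> d}"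
      by (auto simp: numeral_2_eq_2 less_Suc_eq intro: exI[of _ 0] exI[of _ "Suc 0"])
    finally show ?thesis .
  qed
  then have "card X = 2" if "X \<in> map_edges D \<alpha>" for X
    using that alpha_neq unfolding map_edges_def card_2_iff by (metis imageE)
  then show ?thesis
    using card_eq_sum_card_orbits[OF alpha_permutes finite_darts]
    unfolding map_edges_def by simp
qed

lemma sigma_neq_if_regular:
  assumes "map_regular D \<sigma> k" "2 \<le> k" "d \<in> D"
  shows "\<sigma> d \<noteq> d"
proof
  assume "\<sigma> d = d"
  then have "orbit \<sigma> d = {d}" using orbit_eq_singleton_iff by metis
  then show False using assms unfolding map_regular_def map_verts_def by force
qed

lemma map_adj_sym: "map_adj D \<alpha> \<sigma> x y \<Longrightarrow> map_adj D \<alpha> \<sigma> y x"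
  unfolding map_adj_def by (metis alpha_alpha alpha_in)

text \<open>At least \<open>3V\<close> darts by the degrees and at least \<open>6F - 3\<close> by the faces, while Euler's
formula with \<open>2E\<close> darts allows at most \<open>6F - 12\<close>.\<close>

lemma plane_graph_no_large_faces_but_one:
  assumes "plane_graph D \<alpha> \<sigma>"
    and "\<forall>v\<in>map_verts D \<sigma>. 3 \<le> card v"
    and F0: "F0 \<in> map_faces D \<alpha> \<sigma>" "3 \<le> card F0"
    and "\<forall>F\<in>map_faces D \<alpha> \<sigma> - {F0}. 6 \<le> card F"
  shows False
proof -
  define V E F where "V = card (map_verts D \<sigma>)" and "E = card (map_edges D \<alpha>)"
    and "F = card (map_faces D \<alpha> \<sigma>)"
  have finite_faces: "finite (map_faces D \<alpha> \<sigma>)"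
    unfolding map_faces_def using finite_darts by simp
  have "3 * V \<le> card D"
    unfolding card_darts_verts V_def using assms(2) sum_mono[of _ "\<lambda>_. 3"] by fastforce
  moreover have "card D = card F0 + (\<Sum>X\<in>map_faces D \<alpha> \<sigma> - {F0}. card X)"
    unfolding card_darts_faces using sum.remove[OF finite_faces F0(1)] .
  moreover have "6 * (F - 1) \<le> (\<Sum>X\<in>map_faces D \<alpha> \<sigma> - {F0}. card X)"
    using assms(5) sum_mono[of _ "\<lambda>_. 6"] F0(1) finite_faces unfolding F_def by fastforce
  moreover have "1 \<le> F"
    using F0(1) finite_faces unfolding F_def by (metis card_0_eq empty_iff less_one not_le)
  moreover have "int V - int E + int F = 2"
    using assms(1) unfolding plane_graph_def V_def E_def F_def by simp
  ultimately show False
    using card_darts_edges F0(2) unfolding E_def by linarith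
qed

definition reachable_in :: "'d set set \<Rightarrow> 'd set \<Rightarrow> 'd set \<Rightarrow> bool" where
  "reachable_in W = (\<lambda>x y. x \<in> W \<and> y \<in> W \<and> map_adj D \<alpha> \<sigma> x y)\<^sup>*\<^sup>*"

lemma connected_on_iff: "connected_on D \<alpha> \<sigma> W \<longleftrightarrow> (\<forall>u\<in>W. \<forall>v\<in>W. reachable_in W u v)"
  unfolding connected_on_def reachable_in_def ..

lemma reachable_in_sym:
  assumes "reachable_in W x y"
  shows "reachable_in W y x"
  using assms unfolding reachable_in_def
proof (induction rule: rtranclp_induct)
  case (step y z)
  then show ?case using map_adj_sym converse_rtranclp_into_rtranclp by (metis (mono_tags))
qed simp

lemma reachable_in_mem: "reachable_in W a x \<Longrightarrow> a \<in> W \<Longrightarrow> x \<in> W"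
  unfolding reachable_in_def by (induction rule: rtranclp_induct) auto

lemma reachable_in_step:
  assumes "reachable_in W a (orbit \<sigma> d)" "a \<in> W" "d \<in> D" "orbit \<sigma> (\<alpha> d) \<in> W"
  shows "reachable_in W a (orbit \<sigma> (\<alpha> d))"
proof -
  have "orbit \<sigma> d \<in> W" using reachable_in_mem assms(1,2) .
  then show ?thesis
    using assms unfolding reachable_in_def map_adj_def by (auto intro: rtranclp.rtrancl_into_rtrancl)
qed

text \<open>\<open>sealed_by v C\<close>: \<open>C\<close> is a union of components of the graph with \<open>v\<close> deleted.\<close>

definition sealed_by :: "'d set \<Rightarrow> 'd set set \<Rightarrow> bool" where
  "sealed_by v C \<longleftrightarrow> v \<notin> C \<and>
     (\<forall>d\<in>D. orbit \<sigma> d \<in> C \<longrightarrow> orbit \<sigma> (\<alpha> d) \<noteq> v \<longrightarrow> orbit \<sigma> (\<alpha> d) \<in> C)"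

lemma sealed_by_component:
  assumes "a \<in> map_verts D \<sigma> - {v}"
  shows "sealed_by v {x. reachable_in (map_verts D \<sigma> - {v}) a x}"
  unfolding sealed_by_def
proof (intro conjI ballI impI)
  show "v \<notin> {x. reachable_in (map_verts D \<sigma> - {v}) a x}"
    using reachable_in_mem[OF _ assms] by blast
  fix d assume d: "d \<in> D" "orbit \<sigma> d \<in> {x. reachable_in (map_verts D \<sigma> - {v}) a x}"
    "orbit \<sigma> (\<alpha> d) \<noteq> v"
  then have "orbit \<sigma> (\<alpha> d) \<in> map_verts D \<sigma> - {v}"
    unfolding map_verts_def by simp
  then show "orbit \<sigma> (\<alpha> d) \<in> {x. reachable_in (map_verts D \<sigma> - {v}) a x}"
    using reachable_in_step[OF _ assms d(1)] d(2) by simp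
qed

lemma component_meets_neighbour:
  assumes "map_connected D \<alpha> \<sigma>" "v \<in> map_verts D \<sigma>" "a \<in> map_verts D \<sigma> - {v}"
  shows "\<exists>d\<in>D. orbit \<sigma> d = v \<and> reachable_in (map_verts D \<sigma> - {v}) a (orbit \<sigma> (\<alpha> d))"
    (is "\<exists>d\<in>D. ?at_v d")
proof -
  let ?W = "map_verts D \<sigma> - {v}"
  have "reachable_in ?W a y \<or> (\<exists>d\<in>D. ?at_v d)" if "reachable_in (map_verts D \<sigma>) a y" for y
    using that unfolding reachable_in_def[of "map_verts D \<sigma>"]
  proof (induction rule: rtranclp_induct)
    case base
    then show ?case unfolding reachable_in_def by simp
  next
    case (step x y)
    then obtain d where d: "d \<in> D" "orbit \<sigma> d = x" "orbit \<sigma> (\<alpha> d) = y"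
      unfolding map_adj_def by blast
    show ?case
    proof (cases "y = v")
      case True
      then have "?at_v (\<alpha> d)" if "reachable_in ?W a x"
        using that d by simp
      then show ?thesis using step.IH alpha_in[OF d(1)] by blast
    next
      case False
      then show ?thesis
        using step reachable_in_step[OF _ assms(3) d(1)] d by auto
    qed
  qed
  moreover have "reachable_in (map_verts D \<sigma>) a v"
    using assms unfolding map_connected_def connected_on_iff by blast
  moreover have "\<not> reachable_in ?W a v"
    using reachable_in_mem[OF _ assms(3)] by blast
  ultimately show ?thesis by blast
qed

text \<open>Going around the cut-vertex \<open>v\<close> with \<open>\<sigma>\<close>, the far end of the current dart must at some
point pass from outside a component \<open>C\<close> of \<open>G - v\<close> into \<open>C\<close>.\<close>

lemma cut_vertex_separating_corner:
  assumes "map_connected D \<alpha> \<sigma>" "cut_vertex D \<alpha> \<sigma> v"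
  obtains e C where "e \<in> D" "orbit \<sigma> e = v" "sealed_by v C"
    "orbit \<sigma> (\<alpha> e) \<notin> C" "orbit \<sigma> (\<alpha> (\<sigma> e)) \<in> C"
proof -
  let ?W = "map_verts D \<sigma> - {v}"
  have v: "v \<in> map_verts D \<sigma>"
    using assms(2) unfolding cut_vertex_def by blast
  obtain u w where u: "u \<in> ?W" and w: "w \<in> ?W" and not_uw: "\<not> reachable_in ?W u w"
    using assms(2) unfolding cut_vertex_def connected_on_iff by blast
  define C where "C = {x. reachable_in ?W u x}"
  obtain d where d: "d \<in> D" "orbit \<sigma> d = v" "orbit \<sigma> (\<alpha> d) \<in> C"
    using component_meets_neighbour[OF assms(1) v u] unfolding C_def by blast
  obtain d' where d': "d' \<in> D" "orbit \<sigma> d' = v" "reachable_in ?W w (orbit \<sigma> (\<alpha> d'))"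
    using component_meets_neighbour[OF assms(1) v w] by blast
  have "orbit \<sigma> (\<alpha> d') \<notin> C"
  proof
    assume "orbit \<sigma> (\<alpha> d') \<in> C"
    moreover have "reachable_in ?W (orbit \<sigma> (\<alpha> d')) w"
      using reachable_in_sym[OF d'(3)] .
    ultimately have "reachable_in ?W u w"
      unfolding C_def reachable_in_def by (simp add: rtranclp_trans)
    then show False using not_uw by blast
  qed
  moreover have "d \<in> orbit \<sigma> d'"
    using d(2) d'(2) permutation_self_in_orbit[OF permutation_sigma] by metis
  ultimately obtain e where e: "e \<in> orbit \<sigma> d'" "orbit \<sigma> (\<alpha> e) \<notin> C" "orbit \<sigma> (\<alpha> (\<sigma> e)) \<in> C"
    using orbit_exit[OF permutation_sigma, of d d' "\<lambda>x. orbit \<sigma> (\<alpha> x) \<in> C"] d(3) by blast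
  show thesis
  proof
    show "e \<in> D" using e(1) permutes_orbit_subset[OF sigma_permutes d'(1)] by blast
    show "orbit \<sigma> e = v" using e(1) d'(2) orbit_eq_if_in_orbit[OF permutation_sigma] by blast
    show "sealed_by v C" unfolding C_def using sealed_by_component[OF u] .
  qed (use e in auto)
qed

end

locale simple_map = combinatorial_map +
  assumes simple: "map_simple D \<alpha> \<sigma>"
begin

lemma no_loop: "d \<in> D \<Longrightarrow> orbit \<sigma> (\<alpha> d) \<noteq> orbit \<sigma> d"
  and dart_eqI: "d \<in> D \<Longrightarrow> d' \<in> D \<Longrightarrow> orbit \<sigma> d' = orbit \<sigma> d \<Longrightarrow>
    orbit \<sigma> (\<alpha> d') = orbit \<sigma> (\<alpha> d) \<Longrightarrow> d' = d"
  using simple unfolding map_simple_def by blast+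

text \<open>A face entering \<open>C\<close> through \<open>v\<close> spends at least two darts in \<open>C\<close> before it can
return to \<open>v\<close>: returning immediately would need a second edge between the same two
vertices or a vertex of degree 1.\<close>

lemma face_after_corner:
  assumes no_leaf: "\<And>d. d \<in> D \<Longrightarrow> \<sigma> d \<noteq> d"
    and C: "sealed_by (orbit \<sigma> x) C" and x: "x \<in> D" "orbit \<sigma> (\<alpha> x) \<in> C"
  shows "orbit \<sigma> (face_perm \<alpha> \<sigma> x) \<in> C"
    and "orbit \<sigma> (face_perm \<alpha> \<sigma> (face_perm \<alpha> \<sigma> x)) \<in> C"
proof -
  let ?x1 = "face_perm \<alpha> \<sigma> x"
  have x1: "?x1 \<in> D"
    using x(1) unfolding face_perm_def by simp
  show "orbit \<sigma> ?x1 \<in> C" using x(2) by simp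
  have "orbit \<sigma> (\<alpha> ?x1) \<noteq> orbit \<sigma> x"
  proof
    assume "orbit \<sigma> (\<alpha> ?x1) = orbit \<sigma> x"
    then have "\<alpha> ?x1 = x"
      using dart_eqI[OF x(1)] x1 by (simp add: face_perm_def)
    then have "?x1 = \<alpha> x"
      by (metis alpha_alpha x1)
    then show False
      using no_leaf[OF alpha_in[OF x(1)]] unfolding face_perm_def by simp
  qed
  then show "orbit \<sigma> (face_perm \<alpha> \<sigma> ?x1) \<in> C"
    using C x(2) x1 unfolding sealed_by_def by simp
qed

lemma face_before_corner:
  assumes no_leaf: "\<And>d. d \<in> D \<Longrightarrow> \<sigma> d \<noteq> d"
    and C: "sealed_by (orbit \<sigma> e) C" and e: "e \<in> D" "orbit \<sigma> (\<alpha> e) \<notin> C"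
    and z: "z1 \<in> D" "z2 \<in> D" "face_perm \<alpha> \<sigma> z1 = \<alpha> e" "face_perm \<alpha> \<sigma> z2 = z1"
  shows "orbit \<sigma> z1 \<noteq> orbit \<sigma> e" "orbit \<sigma> z1 \<notin> C" "orbit \<sigma> z2 \<notin> C"
proof -
  have head_z1: "orbit \<sigma> (\<alpha> z1) = orbit \<sigma> (\<alpha> e)"
    using vertex_face_perm[of z1] z(3) by simp
  show z1_v: "orbit \<sigma> z1 \<noteq> orbit \<sigma> e"
  proof
    assume "orbit \<sigma> z1 = orbit \<sigma> e"
    then have "z1 = e" using dart_eqI[OF e(1) z(1)] head_z1 by blast
    then have "\<sigma> (\<alpha> e) = \<alpha> e" using z(3) unfolding face_perm_def by simp
    then show False using no_leaf e(1) by simp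
  qed
  have "orbit \<sigma> (\<alpha> e) \<noteq> orbit \<sigma> e" using no_loop e(1) .
  then show z1_C: "orbit \<sigma> z1 \<notin> C"
    using C e(2) z(1) head_z1 unfolding sealed_by_def by metis
  have "orbit \<sigma> (\<alpha> z2) = orbit \<sigma> z1"
    using vertex_face_perm[of z2] z(4) by simp
  then show "orbit \<sigma> z2 \<notin> C"
    using C z(2) z1_v z1_C unfolding sealed_by_def by metis
qed

text \<open>The darts \<open>\<phi>\<^sup>i (\<sigma> e)\<close> for \<open>-3 \<le> i \<le> 2\<close> are told apart by where their tails lie
relative to \<open>v\<close> and \<open>C\<close>, the remaining pairs by their \<open>\<phi>\<close>-successors.\<close>

lemma card_face_at_separating_corner:
  assumes no_leaf: "\<And>d. d \<in> D \<Longrightarrow> \<sigma> d \<noteq> d"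
    and C: "sealed_by (orbit \<sigma> e) C" and e: "e \<in> D"
    and out: "orbit \<sigma> (\<alpha> e) \<notin> C" and into: "orbit \<sigma> (\<alpha> (\<sigma> e)) \<in> C"
  shows "6 \<le> card (orbit (face_perm \<alpha> \<sigma>) (\<sigma> e))"
proof -
  define \<phi> where "\<phi> = face_perm \<alpha> \<sigma>"
  have perm: "permutation \<phi>"
    unfolding \<phi>_def using face_perm_permutes finite_darts permutation_permutes by blast
  have \<phi>_in: "\<phi> d \<in> D" "inv \<phi> d \<in> D" if "d \<in> D" for d
    unfolding \<phi>_def using that face_perm_permutes permutes_in_image permutes_inv by metis+
  have \<phi>_inv: "\<phi> (inv \<phi> d) = d" for d
    using perm permutation_bijective bij_inv_eq_iff by metis
  define x0 x1 x2 y0 z1 z2 where "x0 = \<sigma> e" and "x1 = \<phi> x0" and "x2 = \<phi> x1"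
    and "y0 = \<alpha> e" and "z1 = inv \<phi> y0" and "z2 = inv \<phi> z1"
  have darts: "x0 \<in> D" "x1 \<in> D" "z1 \<in> D" "z2 \<in> D"
    unfolding x0_def x1_def z1_def z2_def y0_def using e \<phi>_in by simp_all
  have "sealed_by (orbit \<sigma> x0) C" using C unfolding x0_def by simp
  from face_after_corner[OF no_leaf this darts(1)] into
  have x1_C: "orbit \<sigma> x1 \<in> C" and x2_C: "orbit \<sigma> x2 \<in> C"
    unfolding x0_def x1_def x2_def \<phi>_def by simp_all
  have "\<phi> z1 = \<alpha> e" "\<phi> z2 = z1"
    unfolding z1_def z2_def y0_def using \<phi>_inv by simp_all
  from face_before_corner[OF no_leaf C e out darts(3,4)] this
  have z1_v: "orbit \<sigma> z1 \<noteq> orbit \<sigma> e" and z1_C: "orbit \<sigma> z1 \<notin> C"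
    and z2_C: "orbit \<sigma> z2 \<notin> C"
    unfolding \<phi>_def by auto
  have x0_v: "orbit \<sigma> x0 = orbit \<sigma> e" and y0_v: "orbit \<sigma> y0 \<noteq> orbit \<sigma> e"
    unfolding x0_def y0_def using no_loop[OF e] by simp_all
  have \<phi>_neq: "\<phi> d \<noteq> d" if "d \<in> D" for d
    using no_loop[OF that] vertex_face_perm[of d] unfolding \<phi>_def by force
  have x1_x2: "x1 \<noteq> x2" and y0_z1: "y0 \<noteq> z1" and z1_z2: "z1 \<noteq> z2"
    using \<phi>_neq darts \<open>\<phi> z1 = \<alpha> e\<close> \<open>\<phi> z2 = z1\<close> unfolding x2_def y0_def by metis+
  have "\<phi> y0 = x0"
    unfolding y0_def x0_def \<phi>_def face_perm_def using e by simp
  then have x0_z2: "x0 \<noteq> z2" and y0_z2: "y0 \<noteq> z2"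
    using \<open>\<phi> z2 = z1\<close> x1_def x1_C z1_C x0_v z1_v by force+
  have v_C: "orbit \<sigma> e \<notin> C" and y0_C: "orbit \<sigma> y0 \<notin> C"
    using C out unfolding sealed_by_def y0_def by simp_all
  have "x0 \<noteq> x1" "x0 \<noteq> x2" "x1 \<noteq> y0" "x1 \<noteq> z1" "x1 \<noteq> z2"
    "x2 \<noteq> y0" "x2 \<noteq> z1" "x2 \<noteq> z2"
    using x0_v v_C x1_C x2_C y0_C z1_C z2_C by metis+
  moreover have "x0 \<noteq> y0" "x0 \<noteq> z1"
    using x0_v y0_v z1_v by metis+
  ultimately have dist: "distinct [x0, x1, x2, y0, z1, z2]"
    using x1_x2 y0_z1 z1_z2 x0_z2 y0_z2 by simp
  have "orbit \<phi> y0 = orbit \<phi> x0"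
    using permutation_orbit_step[OF perm, of y0] \<open>\<phi> y0 = x0\<close> by simp
  moreover have "orbit \<phi> z1 = orbit \<phi> y0" "orbit \<phi> z2 = orbit \<phi> z1"
    using permutation_orbit_step[OF perm] \<open>\<phi> z1 = \<alpha> e\<close> \<open>\<phi> z2 = z1\<close>
    unfolding y0_def by metis+
  ultimately have "{x0, x1, x2, y0, z1, z2} \<subseteq> orbit \<phi> x0"
    using permutation_self_in_orbit[OF perm] unfolding x1_def x2_def
    by (auto intro: orbit.base orbit.step)
  moreover have "finite (orbit \<phi> x0)"
    using finite_orbit[OF permutation_self_in_orbit[OF perm]] .
  ultimately have "card {x0, x1, x2, y0, z1, z2} \<le> card (orbit \<phi> x0)"
    by (rule card_mono[rotated])
  then show ?thesis
    using distinct_card[OF dist] unfolding \<phi>_def x0_def by simp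
qed

lemma cut_vertex_on_long_face:
  assumes "map_connected D \<alpha> \<sigma>" "cut_vertex D \<alpha> \<sigma> v" "\<And>d. d \<in> D \<Longrightarrow> \<sigma> d \<noteq> d"
  shows "\<exists>F\<in>map_faces D \<alpha> \<sigma>. on_face \<sigma> v F \<and> 6 \<le> card F"
proof -
  obtain e C where e: "e \<in> D" "orbit \<sigma> e = v" and "sealed_by v C"
    and "orbit \<sigma> (\<alpha> e) \<notin> C" "orbit \<sigma> (\<alpha> (\<sigma> e)) \<in> C"
    using cut_vertex_separating_corner[OF assms(1,2)] .
  then have "6 \<le> card (orbit (face_perm \<alpha> \<sigma>) (\<sigma> e))"
    using card_face_at_separating_corner[OF assms(3)] by simp
  moreover have "on_face \<sigma> v (orbit (face_perm \<alpha> \<sigma>) (\<sigma> e))"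
    unfolding on_face_def
    using e permutation_self_in_orbit face_perm_permutes finite_darts permutation_permutes
    by (metis vertex_sigma)
  ultimately show ?thesis
    unfolding map_faces_def using e by auto
qed

end

lemma one_nearly_platonic_face_length_lt_6:
  assumes "one_nearly_platonic D \<alpha> \<sigma> F0 d1 d2" "map_regular D \<sigma> k" "3 \<le> k"
  shows "d1 < 6"
proof (rule ccontr)
  assume "\<not> d1 < 6"
  moreover have "plane_graph D \<alpha> \<sigma>" and "combinatorial_map D \<alpha> \<sigma>"
    using assms(1) unfolding one_nearly_platonic_def plane_graph_def combinatorial_map_def by auto
  ultimately show False
    using combinatorial_map.plane_graph_no_large_faces_but_one[of D \<alpha> \<sigma> F0] assms
    unfolding one_nearly_platonic_def map_regular_def face_length_def by auto
qed

theorem mainTheorem6: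
  fixes D :: "'d set" and \<alpha> \<sigma> :: "'d \<Rightarrow> 'd" and k d1 d2 :: nat and F0 v :: "'d set"
  assumes "one_nearly_platonic D \<alpha> \<sigma> F0 d1 d2"
    and "map_regular D \<sigma> k" and "k \<ge> 3"
    and "cut_vertex D \<alpha> \<sigma> v"
  shows "on_face \<sigma> v F0"
proof -
  have graph: "plane_graph D \<alpha> \<sigma>"
    using assms(1) unfolding one_nearly_platonic_def by blast
  then interpret simple_map D \<alpha> \<sigma>
    unfolding plane_graph_def by unfold_locales auto
  have "\<And>d. d \<in> D \<Longrightarrow> \<sigma> d \<noteq> d"
    using sigma_neq_if_regular assms(2,3) by simp
  then obtain F where F: "F \<in> map_faces D \<alpha> \<sigma>" "on_face \<sigma> v F" "6 \<le> card F"
    using cut_vertex_on_long_face assms(4) graph unfolding plane_graph_def by blast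
  moreover have "d1 < 6"
    using one_nearly_platonic_face_length_lt_6 assms(1-3) .
  ultimately have "F = F0"
    using assms(1) unfolding one_nearly_platonic_def face_length_def by force
  then show ?thesis using F(2) by simp
qed

end
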